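(* Let $n\geq 2$ and let $\mathcal{G}=(\mathcal{V},\mathcal{E})$ be a directed graph on $\mathcal{V}=\{1,\ldots,n\}$ in which every node has at least one outgoing edge, with hyperlink matrix $A$, let $m\in(0,1)$, and let $x^*$ be the PageRank vector. Let $p_1,\ldots,p_n>0$ with $\sum_{i=1}^n p_i=1$. Consider the following randomized algorithm. Initially $x_i(0)=z_i(0)=m/n$ for all $i\in\mathcal{V}$. At each time $k\geq 0$, a page $\theta(k)\in\mathcal{V}$ is selected, the sequence $\{\theta(k)\}$ being i.i.d. with $\mathrm{Prob}\{\theta(k)=i\}=p_i$ for every $i\in\mathcal{V}$, and each page $i\in\mathcal{V}$ updates $$x_i(k+1)=\begin{cases}x_i(k)+\frac{1-m}{n_{\theta(k)}}z_{\theta(k)}(k)&\text{if } i\in\mathcal{L}^{\text{out}}_{\theta(k)},\\ x_i(k)&\text{otherwise,}\end{cases}$$ $$z_i(k+1)=\begin{cases}0&\text{if } i=\theta(k),\\ z_i(k)+\frac{1-m}{n_{\theta(k)}}z_{\theta(k)}(k)&\text{if } i\in\mathcal{L}^{\text{out}}_{\theta(k)},\\ z_i(k)&\text{otherwise.}\end{cases}$$ Then $x(k)\to x^*$ as $k\to\infty$ with probability $1$.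
   Context: Write $(i,j)\in\mathcal{E}$ if page $i$ has a link to page $j$. $\mathcal{L}_j^{\text{out}}=\{i:(j,i)\in\mathcal{E}\}$ and $n_j=|\mathcal{L}_j^{\text{out}}|\geq 1$. The hyperlink matrix $A=(a_{ij})$ is defined by $a_{ij}=1/n_j$ if $i\in\mathcal{L}_j^{\text{out}}$ and $a_{ij}=0$ otherwise (column stochastic). The PageRank vector $x^*$ satisfies $x^*=(1-m)Ax^*+\frac{m}{n}\mathbf{1}_n$ and $\mathbf{1}_n^Tx^*=1$. Here $x(k)=(x_1(k),\ldots,x_n(k))^T$. *)

theory Defs
  imports "HOL-Probability.Probability"
begin

text \<open>Pages are 0,...,n-1. E j i means page j has a link to page i.\<close>

definition out_links :: "(nat \<Rightarrow> nat \<Rightarrow> bool) \<Rightarrow> nat \<Rightarrow> nat \<Rightarrow> nat set" where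
  "out_links E n j = {i. i < n \<and> E j i}"

definition hyperlink :: "(nat \<Rightarrow> nat \<Rightarrow> bool) \<Rightarrow> nat \<Rightarrow> nat \<Rightarrow> nat \<Rightarrow> real" where
  "hyperlink E n i j = (if i \<in> out_links E n j then 1 / real (card (out_links E n j)) else 0)"

definition is_pagerank :: "(nat \<Rightarrow> nat \<Rightarrow> bool) \<Rightarrow> nat \<Rightarrow> real \<Rightarrow> (nat \<Rightarrow> real) \<Rightarrow> bool" where
  "is_pagerank E n m xs \<longleftrightarrow>
     (\<forall>i<n. xs i = (1 - m) * (\<Sum>j<n. hyperlink E n i j * xs j) + m / real n)
     \<and> (\<Sum>i<n. xs i) = 1"

fun pr_iter :: "(nat \<Rightarrow> nat \<Rightarrow> bool) \<Rightarrow> nat \<Rightarrow> real \<Rightarrow> (nat \<Rightarrow> nat) \<Rightarrow> nat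
      \<Rightarrow> (nat \<Rightarrow> real) \<times> (nat \<Rightarrow> real)" where
  "pr_iter E n m th 0 = ((\<lambda>i. m / real n), (\<lambda>i. m / real n))"
| "pr_iter E n m th (Suc k) =
     (let (x, z) = pr_iter E n m th k;
          t = th k;
          L = out_links E n t;
          inc = (1 - m) / real (card L) * z t
      in ((\<lambda>i. if i \<in> L then x i + inc else x i),
          (\<lambda>i. if i = t then 0 else if i \<in> L then z i + inc else z i)))"

end

theory Submission
  imports Defs
begin

text \<open>
  The vector z(k) is the residual of x(k) with respect to the PageRank equation: by induction,
  x(k) = (1 - m) A (x(k) - z(k)) + (m/n) 1 and z(k) \<ge> 0. Subtracting this from the PageRank
  equation gives e = (1 - m) A (e + z(k)) for the error e = x* - x(k), and since A is column
  stochastic, m |e|_1 \<le> (1 - m) |z(k)|_1. So it suffices that the residual mass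
  S(k) = \<Sum>_i z_i(k) tends to 0 almost surely.

  Without self-loops, activating page \<theta>(k) lowers S by exactly m z_\<theta>(k)(k). As z(k) is a function
  of \<theta>(0), ..., \<theta>(k-1), it is independent of \<theta>(k), so E S(k+1) \<le> (1 - m min_i p_i) E S(k).
  Thus E S(k) decays geometrically, and since S is nonincreasing and nonnegative, Markov's
  inequality shows S(k) \<rightarrow> 0 almost surely.
\<close>

lemma out_links_subset: "out_links E n j \<subseteq> {..<n}"
  by (auto simp: out_links_def)

lemma finite_out_links [simp]: "finite (out_links E n j)"
  by (rule finite_subset[OF out_links_subset]) simp

lemma sum_if_out_links:
  "(\<Sum>i<n. if i \<in> out_links E n j then c else 0) = real (card (out_links E n j)) * (c :: real)"
proof -
  have "(\<Sum>i<n. if i \<in> out_links E n j then c else 0) = (\<Sum>i\<in>out_links E n j. c)"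
    using out_links_subset[of E n j] by (simp add: sum.If_cases Int_absorb1 Int_commute)
  then show ?thesis
    by simp
qed

lemma hyperlink_nonneg: "0 \<le> hyperlink E n i j"
  by (simp add: hyperlink_def)

lemma sum_hyperlink_column:
  assumes "out_links E n j \<noteq> {}"
  shows "(\<Sum>i<n. hyperlink E n i j) = 1"
  using assms by (simp add: hyperlink_def sum_if_out_links)

lemma sum_abs_column_stochastic_le:
  fixes h :: "nat \<Rightarrow> nat \<Rightarrow> real"
  assumes "\<And>i j. 0 \<le> h i j" "\<And>j. j < n \<Longrightarrow> (\<Sum>i<n. h i j) = 1"
  shows "(\<Sum>i<n. \<bar>\<Sum>j<n. h i j * v j\<bar>) \<le> (\<Sum>j<n. \<bar>v j\<bar>)"
proof -
  have "\<bar>\<Sum>j<n. h i j * v j\<bar> \<le> (\<Sum>j<n. h i j * \<bar>v j\<bar>)" for i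
    using sum_abs[of "\<lambda>j. h i j * v j" "{..<n}"] assms(1) by (simp add: abs_mult)
  then have "(\<Sum>i<n. \<bar>\<Sum>j<n. h i j * v j\<bar>) \<le> (\<Sum>i<n. \<Sum>j<n. h i j * \<bar>v j\<bar>)"
    by (rule sum_mono)
  also have "\<dots> = (\<Sum>j<n. (\<Sum>i<n. h i j) * \<bar>v j\<bar>)"
    by (subst sum.swap) (simp add: sum_distrib_right)
  also have "\<dots> = (\<Sum>j<n. \<bar>v j\<bar>)"
    using assms(2) by simp
  finally show ?thesis .
qed

section \<open>The iteration for a fixed selection sequence\<close>

lemma pr_iter_fst_Suc:
  "fst (pr_iter E n m th (Suc k)) i =
     (if i \<in> out_links E n (th k)
      then fst (pr_iter E n m th k) i
             + (1 - m) / real (card (out_links E n (th k))) * snd (pr_iter E n m th k) (th k)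
      else fst (pr_iter E n m th k) i)"
  by (simp add: Let_def split: prod.split)

lemma pr_iter_snd_Suc:
  "snd (pr_iter E n m th (Suc k)) i =
     (if i = th k then 0
      else if i \<in> out_links E n (th k)
      then snd (pr_iter E n m th k) i
             + (1 - m) / real (card (out_links E n (th k))) * snd (pr_iter E n m th k) (th k)
      else snd (pr_iter E n m th k) i)"
  by (simp add: Let_def split: prod.split)

declare pr_iter.simps(2) [simp del]

lemma pr_iter_cong:
  assumes "\<And>j. j < k \<Longrightarrow> th j = th' j"
  shows "pr_iter E n m th k = pr_iter E n m th' k"
  using assms
proof (induction k)
  case (Suc k)
  then have "pr_iter E n m th k = pr_iter E n m th' k" "th k = th' k"
    by simp_all
  then show ?case
    by (simp add: pr_iter.simps(2))
qed simp

lemma pr_iter_snd_nonneg: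
  assumes "0 \<le> m" "m \<le> 1"
  shows "0 \<le> snd (pr_iter E n m th k) i"
  using assms by (induction k arbitrary: i) (simp_all add: pr_iter_snd_Suc)

lemma pr_iter_fst_invariant:
  assumes "\<forall>k. th k < n" "\<forall>i<n. \<not> E i i" "i < n"
  shows "fst (pr_iter E n m th k) i
           = (1 - m) * (\<Sum>j<n. hyperlink E n i j * (fst (pr_iter E n m th k) j - snd (pr_iter E n m th k) j)) + m / real n"
proof (induction k)
  case 0
  show ?case
    by simp
next
  case (Suc k)
  let ?t = "th k"
  let ?x = "fst (pr_iter E n m th k)"
  let ?z = "snd (pr_iter E n m th k)"
  have "?t \<notin> out_links E n ?t"
    using assms by (simp add: out_links_def)
  then have diff_Suc: "fst (pr_iter E n m th (Suc k)) j - snd (pr_iter E n m th (Suc k)) j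
                         = ?x j - ?z j + (if j = ?t then ?z ?t else 0)" for j
    by (simp add: pr_iter_fst_Suc pr_iter_snd_Suc)
  have "(\<Sum>j<n. hyperlink E n i j * (fst (pr_iter E n m th (Suc k)) j - snd (pr_iter E n m th (Suc k)) j))
          = (\<Sum>j<n. hyperlink E n i j * (?x j - ?z j)) + hyperlink E n i ?t * ?z ?t"
  proof -
    have "(\<Sum>j<n. hyperlink E n i j * (fst (pr_iter E n m th (Suc k)) j - snd (pr_iter E n m th (Suc k)) j))
            = (\<Sum>j<n. hyperlink E n i j * (?x j - ?z j) + (if j = ?t then hyperlink E n i ?t * ?z ?t else 0))"
      unfolding diff_Suc by (intro sum.cong) (simp_all add: ring_distribs)
    then show ?thesis
      using assms(1) by (simp add: sum.distrib)
  qed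
  moreover have "fst (pr_iter E n m th (Suc k)) i = ?x i + (1 - m) * hyperlink E n i ?t * ?z ?t"
    by (simp add: pr_iter_fst_Suc hyperlink_def)
  ultimately show ?case
    using Suc.IH by (simp add: algebra_simps)
qed

definition pr_residual :: "(nat \<Rightarrow> nat \<Rightarrow> bool) \<Rightarrow> nat \<Rightarrow> real \<Rightarrow> (nat \<Rightarrow> nat) \<Rightarrow> nat \<Rightarrow> real" where
  "pr_residual E n m th k = (\<Sum>i<n. snd (pr_iter E n m th k) i)"

lemma pr_residual_0: "0 < n \<Longrightarrow> pr_residual E n m th 0 = m"
  by (simp add: pr_residual_def)

lemma pr_residual_nonneg: "0 \<le> m \<Longrightarrow> m \<le> 1 \<Longrightarrow> 0 \<le> pr_residual E n m th k"
  unfolding pr_residual_def by (intro sum_nonneg pr_iter_snd_nonneg)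

lemma pr_residual_Suc:
  assumes "th k < n" "\<not> E (th k) (th k)" "out_links E n (th k) \<noteq> {}"
  shows "pr_residual E n m th (Suc k) = pr_residual E n m th k - m * snd (pr_iter E n m th k) (th k)"
proof -
  let ?L = "out_links E n (th k)"
  let ?z = "snd (pr_iter E n m th k)"
  let ?inc = "(1 - m) / real (card ?L) * ?z (th k)"
  have "th k \<notin> ?L"
    using assms(2) by (simp add: out_links_def)
  then have "snd (pr_iter E n m th (Suc k)) = (\<lambda>i. ?z i - (if i = th k then ?z (th k) else 0) + (if i \<in> ?L then ?inc else 0))"
    by (auto simp: pr_iter_snd_Suc)
  then have "pr_residual E n m th (Suc k) = pr_residual E n m th k - ?z (th k) + real (card ?L) * ?inc"
    using assms(1) by (simp add: pr_residual_def sum.distrib sum_subtractf sum_if_out_links)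
  moreover have "real (card ?L) * ?inc = (1 - m) * ?z (th k)"
    using assms(3) by simp
  ultimately show ?thesis
    by (simp add: algebra_simps)
qed

lemma decseq_pr_residual:
  assumes "\<forall>k. th k < n" "\<forall>i<n. \<not> E i i" "\<forall>j<n. out_links E n j \<noteq> {}" "0 \<le> m" "m \<le> 1"
  shows "decseq (pr_residual E n m th)"
  using assms by (intro decseq_SucI) (simp add: pr_residual_Suc pr_iter_snd_nonneg)

lemma pr_residual_le:
  assumes "\<forall>k. th k < n" "\<forall>i<n. \<not> E i i" "\<forall>j<n. out_links E n j \<noteq> {}" "0 \<le> m" "m \<le> 1"
  shows "pr_residual E n m th k \<le> m"
proof -
  have "pr_residual E n m th k \<le> pr_residual E n m th 0"
    using decseq_pr_residual[OF assms] by (simp add: decseq_def)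
  also have "\<dots> = m"
    using assms(1) by (intro pr_residual_0) (metis gr_zeroI not_less0)
  finally show ?thesis .
qed

lemma pr_iter_snd_le:
  assumes "\<forall>k. th k < n" "\<forall>i<n. \<not> E i i" "\<forall>j<n. out_links E n j \<noteq> {}" "0 \<le> m" "m \<le> 1"
    and "i < n"
  shows "snd (pr_iter E n m th k) i \<le> m"
proof -
  have "snd (pr_iter E n m th k) i \<le> pr_residual E n m th k"
    unfolding pr_residual_def using assms by (intro member_le_sum pr_iter_snd_nonneg) auto
  also have "\<dots> \<le> m"
    using pr_residual_le[OF assms(1-5)] .
  finally show ?thesis .
qed

lemma pagerank_l1_error_le:
  fixes x z :: "nat \<Rightarrow> real"
  assumes pr: "is_pagerank E n m xstar" and outgoing: "\<forall>j<n. out_links E n j \<noteq> {}"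
    and "m \<le> 1"
    and x: "\<And>i. i < n \<Longrightarrow> x i = (1 - m) * (\<Sum>j<n. hyperlink E n i j * (x j - z j)) + m / real n"
    and z: "\<And>i. i < n \<Longrightarrow> 0 \<le> z i"
  shows "m * (\<Sum>i<n. \<bar>xstar i - x i\<bar>) \<le> (1 - m) * (\<Sum>i<n. z i)"
proof -
  define e where "e i = xstar i - x i" for i
  have e_eq: "e i = (1 - m) * (\<Sum>j<n. hyperlink E n i j * (e j + z j))" if "i < n" for i
  proof -
    have "xstar i = (1 - m) * (\<Sum>j<n. hyperlink E n i j * xstar j) + m / real n"
      using pr that by (simp add: is_pagerank_def)
    then show ?thesis
      using x[OF that] by (simp add: e_def algebra_simps sum.distrib sum_subtractf)
  qed
  have abs_e: "\<bar>e i\<bar> = (1 - m) * \<bar>\<Sum>j<n. hyperlink E n i j * (e j + z j)\<bar>" if "i < n" for i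
    using \<open>m \<le> 1\<close> by (subst e_eq[OF that]) (simp add: abs_mult)
  have "(\<Sum>i<n. \<bar>e i\<bar>) = (1 - m) * (\<Sum>i<n. \<bar>\<Sum>j<n. hyperlink E n i j * (e j + z j)\<bar>)"
    by (simp add: abs_e sum_distrib_left)
  also have "\<dots> \<le> (1 - m) * (\<Sum>j<n. \<bar>e j + z j\<bar>)"
    using \<open>m \<le> 1\<close> outgoing
    by (intro mult_left_mono sum_abs_column_stochastic_le) (simp_all add: hyperlink_nonneg sum_hyperlink_column)
  also have "\<dots> \<le> (1 - m) * (\<Sum>j<n. \<bar>e j\<bar> + z j)"
    using \<open>m \<le> 1\<close> z by (intro mult_left_mono sum_mono) (simp_all add: abs_if)
  finally show ?thesis
    by (simp add: e_def sum.distrib algebra_simps)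
qed

lemma pr_iter_tendsto_pagerank:
  assumes "\<forall>k. th k < n" and "\<forall>i<n. \<not> E i i"
    and outgoing: "\<forall>j<n. out_links E n j \<noteq> {}" and m: "0 < m" "m < 1"
    and pr: "is_pagerank E n m xstar"
    and residual: "pr_residual E n m th \<longlonglongrightarrow> 0"
    and "i < n"
  shows "(\<lambda>k. fst (pr_iter E n m th k) i) \<longlonglongrightarrow> xstar i"
proof (rule Lim_transform2[OF tendsto_const])
  have "\<bar>xstar i - fst (pr_iter E n m th k) i\<bar> \<le> \<bar>pr_residual E n m th k\<bar> * ((1 - m) / m)" for k
  proof -
    have "m * \<bar>xstar i - fst (pr_iter E n m th k) i\<bar> \<le> m * (\<Sum>i<n. \<bar>xstar i - fst (pr_iter E n m th k) i\<bar>)"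
      using m \<open>i < n\<close> by (intro mult_left_mono member_le_sum) auto
    also have "\<dots> \<le> (1 - m) * pr_residual E n m th k"
      unfolding pr_residual_def
      using assms pr_iter_fst_invariant pr_iter_snd_nonneg
      by (intro pagerank_l1_error_le[OF pr outgoing]) auto
    finally show ?thesis
      using m pr_residual_nonneg[of m E n th k] by (simp add: field_simps)
  qed
  then have "\<forall>\<^sub>F k in sequentially.
      norm (xstar i - fst (pr_iter E n m th k) i) \<le> norm (pr_residual E n m th k) * ((1 - m) / m)"
    by simp
  then show "(\<lambda>k. xstar i - fst (pr_iter E n m th k) i) \<longlonglongrightarrow> 0"
    by (rule tendsto_0_le[OF residual])
qed

section \<open>Random selections\<close>

lemma measurable_restrict_count_space:
  fixes X :: "nat \<Rightarrow> 'a \<Rightarrow> 'b::countable" and F :: "(nat \<Rightarrow> 'b) \<Rightarrow> real"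
  assumes "\<And>j. X j \<in> measurable M (count_space UNIV)" "finite J"
  shows "(\<lambda>\<omega>. F (restrict (\<lambda>j. X j \<omega>) J)) \<in> borel_measurable M"
proof -
  have "F \<in> borel_measurable (PiM J (\<lambda>_. count_space UNIV))"
    using \<open>finite J\<close> by (simp add: count_space_PiM_finite)
  moreover have "(\<lambda>\<omega>. restrict (\<lambda>j. X j \<omega>) J) \<in> measurable M (PiM J (\<lambda>_. count_space UNIV))"
    using assms(1) by (intro measurable_restrict) auto
  ultimately show ?thesis
    by (rule measurable_compose[rotated])
qed

lemma (in prob_space) indep_var_past_present:
  fixes X :: "nat \<Rightarrow> 'a \<Rightarrow> 'b::countable" and F :: "(nat \<Rightarrow> 'b) \<Rightarrow> real" and g :: "'b \<Rightarrow> real"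
  assumes "indep_vars (\<lambda>_. count_space UNIV) X UNIV"
  shows "indep_var borel (\<lambda>\<omega>. F (restrict (\<lambda>j. X j \<omega>) {..<k})) borel (\<lambda>\<omega>. g (X k \<omega>))"
proof -
  have "F \<in> borel_measurable (PiM {..<k} (\<lambda>_. count_space UNIV))"
    "(\<lambda>f. g (f k)) \<in> borel_measurable (PiM {k} (\<lambda>_. count_space UNIV))"
    by (simp_all add: count_space_PiM_finite)
  with indep_var_restrict[OF assms, of "{..<k}" "{k}"]
  have "indep_var borel (F \<circ> (\<lambda>\<omega>. restrict (\<lambda>j. X j \<omega>) {..<k}))
          borel ((\<lambda>f. g (f k)) \<circ> (\<lambda>\<omega>. restrict (\<lambda>j. X j \<omega>) {k}))"
    by (intro indep_var_compose) auto
  then show ?thesis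
    by (simp add: comp_def)
qed

lemma (in finite_measure) AE_ex_less_if_integral_tendsto_0:
  fixes S :: "nat \<Rightarrow> 'a \<Rightarrow> real"
  assumes int: "\<And>k. integrable M (S k)" and nonneg: "\<And>k x. 0 \<le> S k x"
    and lim: "(\<lambda>k. \<integral>x. S k x \<partial>M) \<longlonglongrightarrow> 0" and "0 < e"
  shows "AE x in M. \<exists>k. S k x < e"
proof -
  define B where "B = {x \<in> space M. \<forall>k. e \<le> S k x}"
  have B: "B \<in> sets M"
    unfolding B_def using int by measurable
  have "measure M B \<le> (\<integral>x. S k x \<partial>M) / e" for k
  proof -
    have "measure M B \<le> measure M {x \<in> space M. e \<le> S k x}"
      using int by (intro finite_measure_mono) (auto simp: B_def)
    also have "\<dots> \<le> (\<integral>x. S k x \<partial>M) / e"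
      using int nonneg \<open>0 < e\<close> by (intro integral_Markov_inequality_measure[where A = "space M"]) auto
    finally show ?thesis .
  qed
  moreover have "(\<lambda>k. (\<integral>x. S k x \<partial>M) / e) \<longlonglongrightarrow> 0"
    using tendsto_divide_zero[OF lim] .
  ultimately have "measure M B \<le> 0"
    by (intro LIMSEQ_le_const) auto
  then have "emeasure M B = 0"
    using B by (simp add: emeasure_eq_measure measure_le_0_iff)
  then show ?thesis
    using B by (subst AE_iff_measurable[OF B]) (auto simp: B_def not_less)
qed

lemma (in finite_measure) AE_tendsto_0_if_decseq_integral_tendsto_0:
  fixes S :: "nat \<Rightarrow> 'a \<Rightarrow> real"
  assumes int: "\<And>k. integrable M (S k)" and nonneg: "\<And>k x. 0 \<le> S k x"
    and dec: "\<And>x. decseq (\<lambda>k. S k x)" and lim: "(\<lambda>k. \<integral>x. S k x \<partial>M) \<longlonglongrightarrow> 0"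
  shows "AE x in M. (\<lambda>k. S k x) \<longlonglongrightarrow> 0"
proof -
  have "AE x in M. \<forall>j::nat. \<exists>k. S k x < 1 / real (Suc j)"
    using AE_ex_less_if_integral_tendsto_0[OF int nonneg lim] by (subst AE_all_countable) auto
  then show ?thesis
  proof eventually_elim
    case (elim x)
    show ?case
    proof (rule order_tendstoI)
      fix a :: real assume "0 < a"
      then obtain j where "1 / real (Suc j) < a"
        using reals_Archimedean by (auto simp: inverse_eq_divide)
      with elim obtain k where "S k x < a"
        by (meson less_trans)
      then show "\<forall>\<^sub>F k' in sequentially. S k' x < a"
        using dec[of x] by (auto simp: eventually_sequentially decseq_def intro: le_less_trans)
    qed (use nonneg in \<open>auto intro: always_eventually less_le_trans\<close>)
  qed
qed

lemma (in prob_space) AE_less_if_sum_prob_eq_1: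
  assumes "X \<in> measurable M (count_space UNIV)" and "(\<Sum>i<n. prob {\<omega> \<in> space M. X \<omega> = i}) = 1"
  shows "AE \<omega> in M. X \<omega> < (n::nat)"
proof -
  have "prob {\<omega> \<in> space M. X \<omega> < n} = prob (\<Union>i<n. {\<omega> \<in> space M. X \<omega> = i})"
    by (intro arg_cong[where f = prob]) auto
  also have "\<dots> = (\<Sum>i<n. prob {\<omega> \<in> space M. X \<omega> = i})"
    using assms(1) by (intro finite_measure_finite_Union) (auto simp: disjoint_family_on_def)
  finally have "AE \<omega> in M. \<omega> \<in> {\<omega> \<in> space M. X \<omega> < n}"
    using assms(2) by (intro AE_prob_1) simp
  then show ?thesis
    by simp
qed

lemma pr_iter_snd_eq_restrict:
  "snd (pr_iter E n m th k) i = snd (pr_iter E n m (restrict th {..<k}) k) i"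
  using pr_iter_cong[of k th "restrict th {..<k}"] by simp

lemma measurable_pr_iter_snd:
  assumes "\<And>j. X j \<in> measurable M (count_space UNIV)"
  shows "(\<lambda>\<omega>. snd (pr_iter E n m (\<lambda>j. X j \<omega>) k) i) \<in> borel_measurable M"
  by (subst pr_iter_snd_eq_restrict) (rule measurable_restrict_count_space[OF assms], simp)

lemma (in prob_space) indep_var_pr_iter_snd:
  assumes "indep_vars (\<lambda>_. count_space UNIV) X UNIV"
  shows "indep_var borel (\<lambda>\<omega>. snd (pr_iter E n m (\<lambda>j. X j \<omega>) k) i) borel (\<lambda>\<omega>. g (X k \<omega>))"
  by (subst pr_iter_snd_eq_restrict) (rule indep_var_past_present[OF assms])

locale pagerank_selection = prob_space M for M :: "'a measure" +
  fixes E :: "nat \<Rightarrow> nat \<Rightarrow> bool" and n :: nat and m :: real and X :: "nat \<Rightarrow> 'a \<Rightarrow> nat"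
  assumes measurable_X [measurable]: "X k \<in> measurable M (count_space UNIV)"
    and indep_X: "indep_vars (\<lambda>_. count_space UNIV) X UNIV"
    and X_less: "X k \<omega> < n"
    and no_selfloop: "\<forall>i<n. \<not> E i i"
    and outgoing: "\<forall>j<n. out_links E n j \<noteq> {}"
    and m_pos: "0 < m" and m_less_1: "m < 1"
begin

lemma n_pos: "0 < n"
  using X_less[of 0 undefined] by linarith

lemma integrable_pr_iter_snd:
  assumes "i < n"
  shows "integrable M (\<lambda>\<omega>. snd (pr_iter E n m (\<lambda>j. X j \<omega>) k) i)"
  using X_less no_selfloop outgoing m_pos m_less_1 assms
  by (intro integrable_const_bound[where B = m] AE_I2 measurable_pr_iter_snd measurable_X)
     (auto simp: pr_iter_snd_nonneg pr_iter_snd_le)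

lemma integrable_pr_residual: "integrable M (\<lambda>\<omega>. pr_residual E n m (\<lambda>j. X j \<omega>) k)"
  unfolding pr_residual_def by (intro Bochner_Integration.integrable_sum integrable_pr_iter_snd) simp

lemma integral_pr_residual_Suc:
  "(\<integral>\<omega>. pr_residual E n m (\<lambda>j. X j \<omega>) (Suc k) \<partial>M)
     = (\<integral>\<omega>. pr_residual E n m (\<lambda>j. X j \<omega>) k \<partial>M)
       - m * (\<Sum>i<n. (\<integral>\<omega>. snd (pr_iter E n m (\<lambda>j. X j \<omega>) k) i \<partial>M) * prob {\<omega> \<in> space M. X k \<omega> = i})"
proof -
  define z where "z i \<omega> = snd (pr_iter E n m (\<lambda>j. X j \<omega>) k) i" for i \<omega>
  define I :: "nat \<Rightarrow> 'a \<Rightarrow> real" where "I i = indicator {\<omega>. X k \<omega> = i}" for i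
  let ?R = "\<lambda>k \<omega>. pr_residual E n m (\<lambda>j. X j \<omega>) k"
  have I_int: "integrable M (I i)" for i
    unfolding I_def by (intro integrable_const_bound[where B = 1] AE_I2) auto
  have zI_indep: "indep_var borel (z i) borel (I i)" for i
    unfolding z_def I_def indicator_def
    using indep_var_pr_iter_snd[OF indep_X, of E n m k i "\<lambda>t. of_bool (t = i)"] by simp
  have z_int: "integrable M (z i)" if "i < n" for i
    unfolding z_def using that by (rule integrable_pr_iter_snd)
  have zI_int: "integrable M (\<lambda>\<omega>. z i \<omega> * I i \<omega>)" if "i < n" for i
    using zI_indep z_int[OF that] I_int by (rule indep_var_integrable)
  have "?R (Suc k) \<omega> = ?R k \<omega> - m * (\<Sum>i<n. z i \<omega> * I i \<omega>)" for \<omega>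
  proof -
    have "z (X k \<omega>) \<omega> = (\<Sum>i<n. z i \<omega> * I i \<omega>)"
      using X_less[of k \<omega>] by (simp add: I_def indicator_def)
    moreover have "?R (Suc k) \<omega> = ?R k \<omega> - m * z (X k \<omega>) \<omega>"
      unfolding z_def using X_less no_selfloop outgoing by (intro pr_residual_Suc) auto
    ultimately show ?thesis
      by simp
  qed
  moreover have "integrable M (\<lambda>\<omega>. m * (\<Sum>i<n. z i \<omega> * I i \<omega>))"
    using zI_int by (intro integrable_mult_right Bochner_Integration.integrable_sum) simp
  ultimately have "(\<integral>\<omega>. ?R (Suc k) \<omega> \<partial>M) = (\<integral>\<omega>. ?R k \<omega> \<partial>M) - m * (\<integral>\<omega>. (\<Sum>i<n. z i \<omega> * I i \<omega>) \<partial>M)"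
    using integrable_pr_residual by simp
  also have "(\<integral>\<omega>. (\<Sum>i<n. z i \<omega> * I i \<omega>) \<partial>M) = (\<Sum>i<n. (\<integral>\<omega>. z i \<omega> * I i \<omega> \<partial>M))"
    using zI_int by (intro Bochner_Integration.integral_sum) simp
  also have "\<dots> = (\<Sum>i<n. (\<integral>\<omega>. z i \<omega> \<partial>M) * prob {\<omega> \<in> space M. X k \<omega> = i})"
    using zI_indep z_int I_int
    by (intro sum.cong refl) (simp add: indep_var_lebesgue_integral I_def Collect_conj_eq Int_commute)
  finally show ?thesis
    unfolding z_def .
qed

lemma one_minus_mq_bounds:
  assumes "0 < q" and "\<And>k i. i < n \<Longrightarrow> q \<le> prob {\<omega> \<in> space M. X k \<omega> = i}"
  shows "0 \<le> 1 - m * q" "1 - m * q < 1"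
proof -
  have "q \<le> 1"
    using assms(2)[OF n_pos, of 0] prob_le_1 by (rule order.trans)
  then show "0 \<le> 1 - m * q" "1 - m * q < 1"
    using mult_left_le[of q m] mult_pos_pos[OF m_pos \<open>0 < q\<close>] m_pos m_less_1 by linarith+
qed

lemma integral_pr_residual_le:
  assumes "0 < q" and q: "\<And>k i. i < n \<Longrightarrow> q \<le> prob {\<omega> \<in> space M. X k \<omega> = i}"
  shows "(\<integral>\<omega>. pr_residual E n m (\<lambda>j. X j \<omega>) k \<partial>M) \<le> (1 - m * q) ^ k * m"
proof (induction k)
  case 0
  show ?case
    using n_pos by (simp add: pr_residual_0 prob_space)
next
  case (Suc k)
  let ?R = "\<lambda>k \<omega>. pr_residual E n m (\<lambda>j. X j \<omega>) k"
  let ?z = "\<lambda>i \<omega>. snd (pr_iter E n m (\<lambda>j. X j \<omega>) k) i"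
  have "(\<Sum>i<n. (\<integral>\<omega>. ?z i \<omega> \<partial>M) * q) \<le> (\<Sum>i<n. (\<integral>\<omega>. ?z i \<omega> \<partial>M) * prob {\<omega> \<in> space M. X k \<omega> = i})"
    using q m_pos m_less_1 by (intro sum_mono mult_left_mono integral_nonneg) (simp_all add: pr_iter_snd_nonneg)
  moreover have "(\<Sum>i<n. (\<integral>\<omega>. ?z i \<omega> \<partial>M) * q) = q * (\<integral>\<omega>. ?R k \<omega> \<partial>M)"
    using integrable_pr_iter_snd
    by (simp add: pr_residual_def Bochner_Integration.integral_sum sum_distrib_left mult.commute)
  ultimately have "(\<integral>\<omega>. ?R (Suc k) \<omega> \<partial>M) \<le> (1 - m * q) * (\<integral>\<omega>. ?R k \<omega> \<partial>M)"
    using m_pos by (simp add: integral_pr_residual_Suc algebra_simps)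
  also have "\<dots> \<le> (1 - m * q) * ((1 - m * q) ^ k * m)"
    using Suc.IH one_minus_mq_bounds(1)[OF assms] by (rule mult_left_mono)
  finally show ?case
    by simp
qed

lemma AE_pr_residual_tendsto_0:
  assumes "0 < q" and "\<And>k i. i < n \<Longrightarrow> q \<le> prob {\<omega> \<in> space M. X k \<omega> = i}"
  shows "AE \<omega> in M. (\<lambda>k. pr_residual E n m (\<lambda>j. X j \<omega>) k) \<longlonglongrightarrow> 0"
proof (rule AE_tendsto_0_if_decseq_integral_tendsto_0[OF integrable_pr_residual])
  show "0 \<le> pr_residual E n m (\<lambda>j. X j \<omega>) k" for k \<omega>
    using m_pos m_less_1 by (simp add: pr_residual_nonneg)
  show "decseq (\<lambda>k. pr_residual E n m (\<lambda>j. X j \<omega>) k)" for \<omega>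
    using X_less no_selfloop outgoing m_pos m_less_1 by (intro decseq_pr_residual) auto
  have geometric: "(\<lambda>k. (1 - m * q) ^ k * m) \<longlonglongrightarrow> 0"
    using one_minus_mq_bounds[OF assms] by (intro tendsto_mult_left_zero LIMSEQ_power_zero) simp
  show "(\<lambda>k. \<integral>\<omega>. pr_residual E n m (\<lambda>j. X j \<omega>) k \<partial>M) \<longlonglongrightarrow> 0"
    by (rule Lim_null_comparison[OF always_eventually geometric])
       (use integral_pr_residual_le[OF assms] m_pos m_less_1 in \<open>simp add: pr_residual_nonneg\<close>)
qed

lemma AE_pr_iter_tendsto_pagerank:
  assumes pr: "is_pagerank E n m xstar"
    and p: "\<And>i. i < n \<Longrightarrow> 0 < p i" "\<And>k i. i < n \<Longrightarrow> p i \<le> prob {\<omega> \<in> space M. X k \<omega> = i}"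
  shows "AE \<omega> in M. \<forall>i<n. (\<lambda>k. fst (pr_iter E n m (\<lambda>j. X j \<omega>) k) i) \<longlonglongrightarrow> xstar i"
proof -
  define q where "q = Min (p ` {..<n})"
  have "0 < q"
    unfolding q_def using n_pos p(1) by (subst Min_gr_iff) auto
  moreover have "q \<le> prob {\<omega> \<in> space M. X k \<omega> = i}" if "i < n" for k i
    unfolding q_def using that by (intro order.trans[OF Min_le p(2)]) auto
  ultimately have "AE \<omega> in M. (\<lambda>k. pr_residual E n m (\<lambda>j. X j \<omega>) k) \<longlonglongrightarrow> 0"
    by (rule AE_pr_residual_tendsto_0)
  then show ?thesis
  proof eventually_elim
    case (elim \<omega>)
    then show ?case
      using X_less m_pos m_less_1
      by (intro allI impI pr_iter_tendsto_pagerank[OF _ no_selfloop outgoing _ _ pr]) auto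
  qed
qed

end

lemma (in prob_space) pagerank_selection_clamp:
  fixes X :: "nat \<Rightarrow> 'a \<Rightarrow> nat"
  assumes rv: "\<And>k. X k \<in> measurable M (count_space UNIV)"
    and indep: "indep_vars (\<lambda>_. count_space UNIV) X UNIV"
    and "0 < n" "\<forall>i<n. \<not> E i i" "\<forall>j<n. out_links E n j \<noteq> {}" "0 < m" "m < 1"
  shows "pagerank_selection M E n m (\<lambda>k \<omega>. if X k \<omega> < n then X k \<omega> else 0)"
proof unfold_locales
  show "(\<lambda>\<omega>. if X k \<omega> < n then X k \<omega> else 0) \<in> measurable M (count_space UNIV)" for k
    using measurable_compose[OF rv measurable_count_space[of "\<lambda>t. if t < n then t else 0"]] by simp
  show "indep_vars (\<lambda>_. count_space UNIV) (\<lambda>k \<omega>. if X k \<omega> < n then X k \<omega> else 0) UNIV"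
    using indep by (rule indep_vars_compose2[where Y = "\<lambda>k t. if t < n then t else 0"]) simp
qed (use assms(3-) in auto)

theorem proposition1:
  fixes E :: "nat \<Rightarrow> nat \<Rightarrow> bool" and n :: nat and m :: real
    and xstar :: "nat \<Rightarrow> real" and p :: "nat \<Rightarrow> real"
    and M :: "'a measure" and theta :: "nat \<Rightarrow> 'a \<Rightarrow> nat"
  assumes n2: "n \<ge> 2"
    and no_selfloop: "\<forall>i<n. \<not> E i i"
    and outgoing: "\<forall>j<n. out_links E n j \<noteq> {}"
    and m: "0 < m" "m < 1"
    and pr: "is_pagerank E n m xstar"
    and ppos: "\<forall>i<n. p i > 0" and psum: "(\<Sum>i<n. p i) = 1"
    and P: "prob_space M"
    and rv: "\<forall>k. theta k \<in> measurable M (count_space UNIV)"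
    and indep: "prob_space.indep_vars M (\<lambda>_. count_space UNIV) theta UNIV"
    and distr: "\<forall>k. \<forall>i<n. measure M {\<omega> \<in> space M. theta k \<omega> = i} = p i"
  shows "AE \<omega> in M. \<forall>i<n.
           (\<lambda>k. fst (pr_iter E n m (\<lambda>k. theta k \<omega>) k) i) \<longlonglongrightarrow> xstar i"
proof -
  interpret prob_space M
    by (rule P)
  \<comment> \<open>theta leaves the page range only on a null set; X sends those values to page 0.\<close>
  define X where "X k \<omega> = (if theta k \<omega> < n then theta k \<omega> else 0)" for k \<omega>
  interpret pagerank_selection M E n m X
    unfolding X_def[abs_def] using rv indep n2 no_selfloop outgoing m
    by (intro pagerank_selection_clamp) auto
  have "p i \<le> prob {\<omega> \<in> space M. X k \<omega> = i}" if "i < n" for k i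
  proof -
    have "{\<omega> \<in> space M. X k \<omega> = i} \<in> events"
      by measurable
    have "p i = prob {\<omega> \<in> space M. theta k \<omega> = i}"
      using distr that by simp
    also have "\<dots> \<le> prob {\<omega> \<in> space M. X k \<omega> = i}"
      using \<open>{\<omega> \<in> space M. X k \<omega> = i} \<in> events\<close> that
      by (intro finite_measure_mono) (auto simp: X_def)
    finally show ?thesis .
  qed
  then have "AE \<omega> in M. \<forall>i<n. (\<lambda>k. fst (pr_iter E n m (\<lambda>j. X j \<omega>) k) i) \<longlonglongrightarrow> xstar i"
    using ppos by (intro AE_pr_iter_tendsto_pagerank[OF pr, where p = p]) auto
  moreover have "AE \<omega> in M. \<forall>k. theta k \<omega> < n"
    using rv distr psum by (subst AE_all_countable) (auto intro: AE_less_if_sum_prob_eq_1)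
  ultimately show ?thesis
    by eventually_elim (simp add: X_def)
qed

end
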